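(* Let $\lambda$ be a partition of $n$. Denote by $\mathsf{CS}(\lambda)_{[1,n-1]}$ the graph obtained from the crystal skeleton $\mathsf{CS}(\lambda)$ by removing all edges whose label $I$ satisfies $n\in I$. Then there is a graph isomorphism $$\mathsf{CS}(\lambda)_{[1,n-1]}\cong\bigoplus_{\lambda^-}\mathsf{CS}(\lambda^-),$$ where the sum (disjoint union) is over all partitions $\lambda^-$ such that $\lambda/\lambda^-$ is a single box.
   Context: French notation; $\mathsf{SYT}(\lambda)$ standard tableaux; $\mathsf{row}(T)$ reads rows left to right from top row to bottom row; $\mathsf{std}$ replaces the $a_j$ entries $j$, in reading order, by $a_1+\dots+a_{j-1}+1,\dots,a_1+\dots+a_j$. Crystal operator $f_i$: in the subword of letters $i,i+1$ of the reading word, bracket each $i+1$ with an unbracketed $i$ to its right (parenthesis matching); $f_i$ changes the rightmost unbracketed $i$ to $i+1$. For a permutation $\pi$ of $[N]$ and $I=[i,i+2m]\subseteq[N]$, $m\ge1$, $I$ is a Dyck pattern interval of $\pi$ if the RSK insertion tableau of the subword $\pi|_I$ of letters in $I$ has bottom row $i,\dots,i+m$ and top row $i+m+1,\dots,i+2m$; a Dyck pattern interval of $T$ is one of $\mathsf{row}(T)$. The crystal skeleton $\mathsf{CS}(\lambda)$, $|\lambda|=N$, is the directed graph on $\mathsf{SYT}(\lambda)$ with, for each Dyck pattern interval $I=[i,i+2m]$ of $T$, an edge $T\xrightarrow{I}\mathsf{std}(f_i(b))$ labeled $I$, where $b$ is obtained from $T$ by replacing entries $i,\dots,i+m$ by $i$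 and $i+m+1,\dots,i+2m$ by $i+1$. (Equivalently, it is the crystal of semistandard tableaux with each quasi-crystal $\{b:\mathsf{std}(b)=T\}$ contracted to a vertex.) Graph isomorphisms here are of directed edge-labeled graphs. *)

theory Defs
  imports Main
begin

text \<open>A partition is a weakly decreasing list of positive parts.  A tableau is a
list of rows; row 0 is the bottom (longest) row, as in French notation.\<close>

definition is_partition :: "nat \<Rightarrow> nat list \<Rightarrow> bool" where
  "is_partition n lam \<longleftrightarrow> sorted_wrt (\<ge>) lam \<and> (\<forall>k\<in>set lam. 0 < k) \<and> sum_list lam = n"

definition part_at :: "nat list \<Rightarrow> nat \<Rightarrow> nat" where
  "part_at lam k = (if k < length lam then lam ! k else 0)"

definition single_box :: "nat list \<Rightarrow> nat list \<Rightarrow> bool" where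
  "single_box lam mu \<longleftrightarrow> (\<forall>k. part_at mu k \<le> part_at lam k) \<and> sum_list mu + 1 = sum_list lam"

definition SYT :: "nat list \<Rightarrow> nat list list set" where
  "SYT lam = {T. map length T = lam
     \<and> distinct (concat T) \<and> set (concat T) = {1..sum_list lam}
     \<and> (\<forall>r\<in>set T. sorted_wrt (<) r)
     \<and> (\<forall>r c. Suc r < length T \<and> c < length (T ! Suc r) \<longrightarrow> T ! r ! c < T ! Suc r ! c)}"

definition row_word :: "nat list list \<Rightarrow> nat list" where
  "row_word T = concat (rev T)"

fun chop :: "nat list \<Rightarrow> 'a list \<Rightarrow> 'a list list" where
  "chop [] w = []"
| "chop (k # ks) w = take k w # chop ks (drop k w)"

definition reshape :: "nat list \<Rightarrow> nat list \<Rightarrow> nat list list" where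
  "reshape lam w = rev (chop (rev lam) w)"

definition std_word :: "nat list \<Rightarrow> nat list" where
  "std_word w = map (\<lambda>k. card {j. j < length w \<and> w ! j < w ! k}
                        + card {j. j < k \<and> w ! j = w ! k} + 1) [0..<length w]"

text \<open>Positions of unbracketed letters i (each i+1 is bracketed with an unbracketed i
to its right).  Arguments: i, number of currently open (unmatched) i+1, current position.\<close>
fun unbr :: "nat \<Rightarrow> nat \<Rightarrow> nat \<Rightarrow> nat list \<Rightarrow> nat list" where
  "unbr i c p [] = []"
| "unbr i c p (x # xs) =
     (if x = Suc i then unbr i (Suc c) (Suc p) xs
      else if x = i then (if 0 < c then unbr i (c - 1) (Suc p) xs else p # unbr i c (Suc p) xs)
      else unbr i c (Suc p) xs)"

definition f_op :: "nat \<Rightarrow> nat list \<Rightarrow> nat list option" where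
  "f_op i w = (let U = unbr i 0 0 w in if U = [] then None else Some (w[last U := Suc i]))"

fun row_insert :: "nat \<Rightarrow> nat list \<Rightarrow> nat list \<times> nat option" where
  "row_insert x [] = ([x], None)"
| "row_insert x (y # ys) = (if x < y then (x # ys, Some y)
                            else (let (r, b) = row_insert x ys in (y # r, b)))"

fun rsk_insert :: "nat \<Rightarrow> nat list list \<Rightarrow> nat list list" where
  "rsk_insert x [] = [[x]]"
| "rsk_insert x (r # rs) = (case row_insert x r of
       (r', None) \<Rightarrow> r' # rs
     | (r', Some y) \<Rightarrow> r' # rsk_insert y rs)"

definition rsk_P :: "nat list \<Rightarrow> nat list list" where
  "rsk_P w = foldl (\<lambda>T x. rsk_insert x T) [] w"

definition dyck_interval :: "nat \<Rightarrow> nat list \<Rightarrow> nat \<Rightarrow> nat \<Rightarrow> bool" where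
  "dyck_interval N w i m \<longleftrightarrow> 1 \<le> m \<and> 1 \<le> i \<and> i + 2 * m \<le> N \<and>
     rsk_P (filter (\<lambda>x. i \<le> x \<and> x \<le> i + 2 * m) w) = [[i..<i + m + 1], [i + m + 1..<i + 2 * m + 1]]"

definition collapse :: "nat \<Rightarrow> nat \<Rightarrow> nat list \<Rightarrow> nat list" where
  "collapse i m w = map (\<lambda>x. if i \<le> x \<and> x \<le> i + m then i
                             else if i + m < x \<and> x \<le> i + 2 * m then Suc i else x) w"

text \<open>Directed edge-labelled graphs: vertex set and set of (source, label, target).\<close>
type_synonym ('v, 'l) lgraph = "'v set \<times> ('v \<times> 'l \<times> 'v) set"

definition CS :: "nat list \<Rightarrow> (nat list list, nat set) lgraph" where
  "CS lam = (SYT lam,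
     {(T, {i..i + 2 * m}, reshape lam (std_word b')) | T i m b'.
        T \<in> SYT lam \<and> dyck_interval (sum_list lam) (row_word T) i m
        \<and> f_op i (collapse i m (row_word T)) = Some b'})"

definition remove_label_containing :: "nat \<Rightarrow> ('v, nat set) lgraph \<Rightarrow> ('v, nat set) lgraph" where
  "remove_label_containing n G = (fst G, {e \<in> snd G. n \<notin> fst (snd e)})"

definition disj_union :: "'i set \<Rightarrow> ('i \<Rightarrow> ('v, 'l) lgraph) \<Rightarrow> ('i \<times> 'v, 'l) lgraph" where
  "disj_union S G = (SIGMA a:S. fst (G a),
     {((a, u), l, (a, v)) | a u l v. a \<in> S \<and> (u, l, v) \<in> snd (G a)})"

definition lgraph_iso :: "('a, 'l) lgraph \<Rightarrow> ('b, 'l) lgraph \<Rightarrow> bool" where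
  "lgraph_iso G H \<longleftrightarrow> (\<exists>f. bij_betw f (fst G) (fst H) \<and>
     (\<forall>u\<in>fst G. \<forall>v\<in>fst G. \<forall>l. (u, l, v) \<in> snd G \<longleftrightarrow> (f u, l, f v) \<in> snd H))"

end

theory Submission
  imports Defs "HOL-Library.Multiset"
begin

text \<open>In a standard tableau of shape lam the largest entry n sits at the end of a row r whose
  successor row is shorter.  Deleting it leaves a standard tableau of a shape mu with lam/mu a
  single box, and conversely appending n to row r of any standard tableau of shape mu gives a
  standard tableau of shape lam.  On reading words this is the insertion of the letter n.  For an
  interval I = [i, i+2m] not containing n, the letter n is invisible to the Dyck pattern test on I,
  is fixed by collapsing and by f_i, and stays the largest letter under standardization.  So the
  edges with n not in I correspond exactly to the edges of the crystal skeletons of the shapes mu.\<close>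

section \<open>Inserting a letter into a word\<close>

definition insert_at :: "nat \<Rightarrow> 'a \<Rightarrow> 'a list \<Rightarrow> 'a list" where
  "insert_at p x w = take p w @ x # drop p w"

lemma length_insert_at [simp]: "p \<le> length w \<Longrightarrow> length (insert_at p x w) = Suc (length w)"
  by (simp add: insert_at_def)

lemma mset_insert_at [simp]: "mset (insert_at p x w) = add_mset x (mset w)"
  by (metis insert_at_def append_take_drop_id mset_append mset.simps(2) union_mset_add_mset_right)

lemma set_insert_at [simp]: "set (insert_at p x w) = insert x (set w)"
  by (metis mset_insert_at set_mset_mset set_mset_add_mset_insert)

lemma distinct_insert_at [simp]: "distinct (insert_at p x w) \<longleftrightarrow> distinct (x # w)"
  by (rule mset_eq_imp_distinct_iff) simp

lemma filter_insert_at: "\<not> P x \<Longrightarrow> filter P (insert_at p x w) = filter P w"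
  by (simp add: insert_at_def filter_append[symmetric])

lemma map_insert_at: "map f (insert_at p x w) = insert_at p (f x) (map f w)"
  by (simp add: insert_at_def take_map drop_map)

lemma nth_insert_at:
  "p \<le> length w \<Longrightarrow> k \<le> length w \<Longrightarrow>
   insert_at p x w ! k = (if k < p then w ! k else if k = p then x else w ! (k - 1))"
  unfolding insert_at_def by (auto simp: nth_append min_def nth_Cons' not_less)

lemma take_insert_at_le: "k \<le> p \<Longrightarrow> p \<le> length w \<Longrightarrow> take k (insert_at p x w) = take k w"
  by (simp add: insert_at_def min_def)

lemma take_insert_at_gt:
  assumes "p < k" "p \<le> length w"
  shows "take k (insert_at p x w) = insert_at p x (take (k - 1) w)"
proof -
  obtain k' where "k = Suc k'" "p \<le> k'" using assms by (cases k) auto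
  then show ?thesis using assms by (simp add: insert_at_def min_def drop_take Suc_diff_le)
qed

lemma list_update_insert_at:
  assumes "p \<le> length w"
  shows "(insert_at p x w)[(if j < p then j else Suc j) := y] = insert_at p x (w[j := y])"
  using assms by (cases "j < p")
    (auto simp: insert_at_def list_update_append Suc_diff_le take_update_swap drop_update_swap
      list_update_beyond)

lemma unbr_Suc_pos: "unbr i c (Suc q) w = map Suc (unbr i c q w)"
  by (induction w arbitrary: c q) auto

lemma unbr_bounds: "j \<in> set (unbr i c q w) \<Longrightarrow> q \<le> j \<and> j < q + length w"
proof (induction w arbitrary: c q)
  case (Cons a w)
  then show ?case by (fastforce split: if_splits)
qed simp

lemma unbr_insert_other:
  assumes "x \<noteq> i" "x \<noteq> Suc i"
  shows "unbr i c q (u @ x # v) = map (\<lambda>j. if j < q + length u then j else Suc j) (unbr i c q (u @ v))"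
proof (induction u arbitrary: c q)
  case Nil
  have "map (\<lambda>j. if j < q then j else Suc j) (unbr i c q v) = map Suc (unbr i c q v)"
    using unbr_bounds[of _ i c q v] by (intro map_cong) (auto dest: leD)
  then show ?case using assms by (simp add: unbr_Suc_pos)
next
  case (Cons a u)
  then show ?case by (cases "a = Suc i"; cases "a = i"; cases "0 < c") simp_all
qed

lemma f_op_insert_at:
  assumes "x \<noteq> i" "x \<noteq> Suc i" "p \<le> length w"
  shows "f_op i (insert_at p x w) = map_option (insert_at p x) (f_op i w)"
proof -
  define shift where "shift j = (if j < p then j else Suc j)" for j
  have U: "unbr i 0 0 (insert_at p x w) = map shift (unbr i 0 0 w)"
    using unbr_insert_other[OF assms(1,2), of 0 0 "take p w" "drop p w"] assms(3)
    by (simp add: insert_at_def shift_def min_def)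
  show ?thesis
    using list_update_insert_at[OF assms(3), where x = x and j = "last (unbr i 0 0 w)"]
    by (simp add: f_op_def Let_def U last_map shift_def)
qed

lemma f_op_SomeD:
  "f_op i w = Some b \<Longrightarrow> length b = length w \<and> set b \<subseteq> insert (Suc i) (set w)"
  unfolding f_op_def by (auto simp: Let_def split: if_splits dest: set_update_subset_insert[THEN subsetD])

lemma collapse_insert_at: "i + 2 * m < x \<Longrightarrow> collapse i m (insert_at p x w) = insert_at p x (collapse i m w)"
  unfolding collapse_def by (simp add: map_insert_at)

lemma set_collapse: "set (collapse i m w) \<subseteq> set w \<union> {i, Suc i}"
  unfolding collapse_def by auto

lemma length_collapse [simp]: "length (collapse i m w) = length w"
  unfolding collapse_def by simp

lemma dyck_interval_insert_at:
  "i + 2 * m < N \<Longrightarrow> dyck_interval N (insert_at p N w) i m \<longleftrightarrow> dyck_interval (N - 1) w i m"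
  by (auto simp: dyck_interval_def filter_insert_at)

lemma dyck_f_op_insert_max:
  assumes p: "p \<le> length w" and im: "i + 2 * m < N"
  shows "dyck_interval N (insert_at p N w) i m \<and> f_op i (collapse i m (insert_at p N w)) = Some b'
     \<longleftrightarrow> (\<exists>b. dyck_interval (N - 1) w i m \<and> f_op i (collapse i m w) = Some b \<and> b' = insert_at p N b)"
proof -
  have "f_op i (collapse i m (insert_at p N w)) = map_option (insert_at p N) (f_op i (collapse i m w))"
    if "1 \<le> m"
    using collapse_insert_at[OF im] f_op_insert_at[of N i p "collapse i m w"] im p that by simp
  then show ?thesis
    using dyck_interval_insert_at[OF im] by (auto simp: dyck_interval_def)
qed

lemma length_std_word [simp]: "length (std_word w) = length w"
  by (simp add: std_word_def)

lemma nth_std_word: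
  assumes "k < length w"
  shows "std_word w ! k = length (filter (\<lambda>y. y < w ! k) w) + length (filter (\<lambda>y. y = w ! k) (take k w)) + 1"
proof -
  have "{j. j < k \<and> w ! j = w ! k} = {j. j < length (take k w) \<and> take k w ! j = w ! k}"
    using assms by auto
  then show ?thesis using assms by (simp add: std_word_def length_filter_conv_card)
qed

lemma set_std_word: "set (std_word w) \<subseteq> {1..length w}"
proof
  fix y assume "y \<in> set (std_word w)"
  then obtain k where k: "k < length w" and y: "y = std_word w ! k"
    by (auto simp: in_set_conv_nth)
  let ?A = "{j. j < length w \<and> w ! j < w ! k}" and ?B = "{j. j < k \<and> w ! j = w ! k}"
  have "card ?A + card ?B = card (?A \<union> ?B)" by (intro card_Un_disjoint[symmetric]) auto
  also have "\<dots> \<le> card ({..<length w} - {k})" using k by (intro card_mono) auto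
  finally show "y \<in> {1..length w}" using y k by (simp add: std_word_def)
qed

lemma std_word_insert_max:
  assumes max: "\<forall>y\<in>set b. y < x" and p: "p \<le> length b"
  shows "std_word (insert_at p x b) = insert_at p (Suc (length b)) (std_word b)"
proof (rule nth_equalityI)
  fix k assume "k < length (std_word (insert_at p x b))"
  then have k: "k \<le> length b" using p by simp
  have nth: "std_word (insert_at p x b) ! k = length (filter (\<lambda>y. y < insert_at p x b ! k) (insert_at p x b))
      + length (filter (\<lambda>y. y = insert_at p x b ! k) (take k (insert_at p x b))) + 1"
    using nth_std_word[of k "insert_at p x b"] k p by simp
  consider "k < p" | "k = p" | "p < k" by linarith
  then show "std_word (insert_at p x b) ! k = insert_at p (Suc (length b)) (std_word b) ! k"
  proof cases
    case 1
    then have "\<not> x < b ! k" using max p by (simp add: not_less less_imp_le)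
    then show ?thesis using 1 nth nth_std_word[of k b] max p k
      by (simp add: nth_insert_at filter_insert_at take_insert_at_le)
  next
    case 2
    have "filter (\<lambda>y. y < x) (insert_at p x b) = b" using max by (simp add: filter_insert_at)
    moreover have "filter (\<lambda>y. y = x) (take k b) = []"
      using max by (auto simp: filter_empty_conv dest: in_set_takeD)
    ultimately show ?thesis using nth 2 p by (simp add: nth_insert_at take_insert_at_le)
  next
    case 3
    then have "k - 1 < length b" "p \<le> length (take (k - 1) b)" using k by auto
    moreover from this have "\<not> x < b ! (k - 1)" "x \<noteq> b ! (k - 1)"
      using max nth_mem[of "k - 1" b] by fastforce+
    ultimately show ?thesis using nth nth_std_word[of "k - 1" b] 3 max p k
      by (simp add: nth_insert_at filter_insert_at take_insert_at_gt)
  qed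
qed (use p in simp)

section \<open>Adding a box to a tableau\<close>

definition add_part :: "nat \<Rightarrow> nat list \<Rightarrow> nat list" where
  "add_part r mu = (if r < length mu then mu[r := Suc (mu ! r)] else mu @ [1])"

definition row_at :: "'a list list \<Rightarrow> nat \<Rightarrow> 'a list" where
  "row_at X r = (if r < length X then X ! r else [])"

definition add_box :: "nat \<Rightarrow> 'a \<Rightarrow> 'a list list \<Rightarrow> 'a list list" where
  "add_box r x X = (if r < length X then X[r := X ! r @ [x]] else X @ [[x]])"

lemma map_length_add_box: "r \<le> length X \<Longrightarrow> map length (add_box r x X) = add_part r (map length X)"
  by (auto simp: add_box_def add_part_def map_update)

lemma length_add_box: "r \<le> length X \<Longrightarrow> length (add_box r x X) = max (Suc r) (length X)"
  by (auto simp: add_box_def)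

lemma nth_add_box:
  "r \<le> length X \<Longrightarrow> k < length (add_box r x X) \<Longrightarrow>
   add_box r x X ! k = (if k = r then row_at X r @ [x] else X ! k)"
  by (auto simp: add_box_def row_at_def nth_append split: if_splits)

lemma set_add_box: "set (add_box r x X) \<subseteq> insert (row_at X r @ [x]) (set X)"
  by (auto simp: add_box_def row_at_def dest: set_update_subset_insert[THEN subsetD])

lemma length_row_word: "length (row_word T) = sum_list (map length T)"
  by (simp add: row_word_def length_concat sum_list_rev rev_map[symmetric])

lemma set_row_word: "set (row_word T) = set (concat T)"
  by (simp add: row_word_def)

lemma mset_row_word: "mset (row_word T) = mset (concat T)"
  unfolding row_word_def by (induction T) auto

lemma distinct_row_word: "distinct (row_word T) \<longleftrightarrow> distinct (concat T)"
  by (rule mset_eq_imp_distinct_iff) (simp add: mset_row_word)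

text \<open>Row r and the rows above it are read before the new box at the end of row r.\<close>
lemma row_word_add_box:
  assumes "r \<le> length X"
  shows "row_word (add_box r x X) = insert_at (sum_list (map length (drop r X))) x (row_word X)"
proof (cases "r < length X")
  case True
  then have X: "X = take r X @ X ! r # drop (Suc r) X" by (simp add: id_take_nth_drop)
  have "X[r := X ! r @ [x]] = take r X @ (X ! r @ [x]) # drop (Suc r) X"
    by (subst X) (simp add: list_update_append True)
  moreover have "row_word X = (concat (rev (drop (Suc r) X)) @ X ! r) @ concat (rev (take r X))"
    by (subst X) (simp add: row_word_def)
  moreover have "sum_list (map length (drop r X)) = length (concat (rev (drop (Suc r) X)) @ X ! r)"
    using True by (simp add: Cons_nth_drop_Suc[symmetric] length_concat sum_list_rev rev_map[symmetric])
  ultimately show ?thesis using True by (simp add: add_box_def row_word_def insert_at_def)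
qed (use assms in \<open>simp add: add_box_def row_word_def insert_at_def\<close>)

lemma set_concat_add_box:
  fixes X :: "nat list list"
  assumes "r \<le> length X"
  shows "set (concat (add_box r x X)) = insert x (set (concat X))"
proof -
  have "set (concat (add_box r x X)) = set (row_word (add_box r x X))" by (simp only: set_row_word)
  also have "\<dots> = insert x (set (row_word X))" by (simp add: row_word_add_box[OF assms])
  finally show ?thesis by (simp only: set_row_word)
qed

lemma distinct_concat_add_box:
  fixes X :: "nat list list"
  assumes "r \<le> length X"
  shows "distinct (concat (add_box r x X)) \<longleftrightarrow> distinct (concat X) \<and> x \<notin> set (concat X)"
proof -
  have "distinct (concat (add_box r x X)) \<longleftrightarrow> distinct (row_word (add_box r x X))"
    by (simp only: distinct_row_word)
  also have "\<dots> \<longleftrightarrow> distinct (x # row_word X)" by (simp add: row_word_add_box[OF assms])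
  finally show ?thesis by (simp only: distinct.simps distinct_row_word set_row_word) blast
qed

lemma chop_concat: "chop (map length Ts) (concat Ts) = Ts"
  by (induction Ts) auto

lemma concat_chop: "length w = sum_list ks \<Longrightarrow> concat (chop ks w) = w \<and> map length (chop ks w) = ks"
  by (induction ks arbitrary: w) (auto simp: min_def)

lemma reshape_row_word: "reshape (map length T) (row_word T) = T"
  unfolding reshape_def row_word_def by (metis chop_concat rev_map rev_rev_ident)

lemma
  assumes "length w = sum_list lam"
  shows row_word_reshape: "row_word (reshape lam w) = w"
    and map_length_reshape: "map length (reshape lam w) = lam"
  using concat_chop[of w "rev lam"] assms
  by (auto simp: reshape_def row_word_def sum_list_rev rev_map[symmetric])

lemma sum_list_drop_le: "sum_list (drop r xs) \<le> sum_list (xs :: nat list)"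
  by (metis append_take_drop_id le_add2 sum_list_append)

lemma reshape_insert_at:
  assumes "length w = sum_list mu" "r \<le> length mu"
  shows "reshape (add_part r mu) (insert_at (sum_list (drop r mu)) x w) = add_box r x (reshape mu w)"
proof -
  let ?Y = "reshape mu w"
  have Y: "row_word ?Y = w" "map length ?Y = mu"
    using row_word_reshape[OF assms(1)] map_length_reshape[OF assms(1)] .
  then have r: "r \<le> length ?Y" using assms(2) by (metis length_map)
  show ?thesis
    using reshape_row_word[of "add_box r x ?Y"] row_word_add_box[OF r] map_length_add_box[OF r] Y
    by (simp add: drop_map[symmetric])
qed

lemma reshape_std_word_insert_max:
  assumes "\<forall>y\<in>set b. y < x" "length b = sum_list mu" "r \<le> length mu"
  shows "reshape (add_part r mu) (std_word (insert_at (sum_list (drop r mu)) x b))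
       = add_box r (Suc (length b)) (reshape mu (std_word b))"
  using assms sum_list_drop_le[of r mu] std_word_insert_max reshape_insert_at by simp

section \<open>Shapes differing by one box\<close>

lemma part_at_add_part:
  "r \<le> length mu \<Longrightarrow> part_at (add_part r mu) k = part_at mu k + (if k = r then 1 else 0)"
  by (auto simp: part_at_def add_part_def nth_append nth_list_update)

lemma sum_list_add_part: "r \<le> length mu \<Longrightarrow> sum_list (add_part r mu) = Suc (sum_list mu)"
  by (auto simp: add_part_def sum_list_update)

lemma single_box_add_part: "r \<le> length mu \<Longrightarrow> single_box (add_part r mu) mu"
  by (simp add: single_box_def part_at_add_part sum_list_add_part)

lemma add_part_inj: "r \<le> length mu \<Longrightarrow> r' \<le> length mu \<Longrightarrow> add_part r mu = add_part r' mu \<Longrightarrow> r = r'"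
  using part_at_add_part[of r mu r] part_at_add_part[of r' mu r] by (auto split: if_splits)

lemma positive_add_part: "\<forall>k\<in>set mu. 0 < k \<Longrightarrow> \<forall>k\<in>set (add_part r mu). 0 < k"
  by (auto simp: add_part_def dest: set_update_subset_insert[THEN subsetD])

lemma part_at_inject:
  assumes "\<forall>k\<in>set xs. 0 < k" "\<forall>k\<in>set ys. 0 < k" "\<And>k. part_at xs k = part_at ys k"
  shows "xs = ys"
proof -
  have "\<not> length xs < length ys" "\<not> length ys < length xs"
    using assms(3)[of "length xs"] assms(3)[of "length ys"] assms(1,2)
    by (auto simp: part_at_def) (metis nth_mem less_irrefl)+
  then have "length xs = length ys" by simp
  then show ?thesis
  proof (rule nth_equalityI)
    fix k assume "k < length xs"
    then show "xs ! k = ys ! k" using assms(3)[of k] \<open>length xs = length ys\<close> by (simp add: part_at_def)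
  qed
qed

lemma sum_list_part_at: "length xs \<le> K \<Longrightarrow> sum_list xs = (\<Sum>k<K. part_at xs k)"
proof -
  assume K: "length xs \<le> K"
  have "sum_list xs = (\<Sum>k<length xs. part_at xs k)"
    by (simp add: sum_list_sum_nth atLeast0LessThan part_at_def)
  also have "\<dots> = (\<Sum>k<K. part_at xs k)"
    using K by (intro sum.mono_neutral_left) (auto simp: part_at_def)
  finally show ?thesis .
qed

lemma part_at_antimono: "is_partition n lam \<Longrightarrow> i \<le> j \<Longrightarrow> part_at lam j \<le> part_at lam i"
  using sorted_wrt_nth_less[of "(\<ge>)" lam i j]
  by (cases "i = j") (auto simp: is_partition_def part_at_def)

lemma single_box_part_at:
  assumes "single_box lam mu"
  obtains r where "\<And>k. part_at lam k = part_at mu k + (if k = r then 1 else 0)"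
proof -
  define K where "K = length lam + length mu"
  define d where "d k = part_at lam k - part_at mu k" for k
  have le: "part_at mu k \<le> part_at lam k" for k using assms by (simp add: single_box_def)
  have "(\<Sum>k<K. part_at lam k) = (\<Sum>k<K. part_at mu k) + (\<Sum>k<K. d k)"
    using le by (simp add: d_def sum.distrib[symmetric])
  then have sd: "(\<Sum>k<K. d k) = 1"
    using assms sum_list_part_at[of lam K] sum_list_part_at[of mu K] by (simp add: single_box_def K_def)
  then obtain r where r: "r < K" "d r \<noteq> 0" by (metis sum.neutral lessThan_iff zero_neq_one)
  have "d k = 0" if "k \<noteq> r" for k
  proof (cases "k < K")
    case True
    have "d r + d k \<le> (\<Sum>k<K. d k)" using sum_mono2[of "{..<K}" "{r, k}" d] True r that by auto
    then show ?thesis using sd r by simp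
  qed (auto simp: d_def part_at_def K_def)
  moreover have "d r = 1" using sd r member_le_sum[of r "{..<K}" d] by auto
  ultimately have "part_at lam k = part_at mu k + d k" "d k = (if k = r then 1 else 0)" for k
    using le[of k] by (auto simp: d_def)
  then show ?thesis using that by simp
qed

lemma single_box_iff_add_part:
  assumes lam: "is_partition n lam" and mu: "is_partition (n - 1) mu"
  shows "single_box lam mu \<longleftrightarrow> (\<exists>r \<le> length mu. lam = add_part r mu)"
proof
  assume "single_box lam mu"
  then obtain r where pa: "\<And>k. part_at lam k = part_at mu k + (if k = r then 1 else 0)"
    using single_box_part_at by blast
  have "r \<le> length mu"
  proof (rule ccontr)
    assume "\<not> r \<le> length mu"
    then have "part_at lam r = 1" "part_at lam (r - 1) = 0"
      using pa[of r] pa[of "r - 1"] by (auto simp: part_at_def)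
    then show False using part_at_antimono[OF lam, of "r - 1" r] by simp
  qed
  moreover have "lam = add_part r mu"
    using lam mu positive_add_part[of mu r] part_at_add_part[OF \<open>r \<le> length mu\<close>] pa
    by (intro part_at_inject) (auto simp: is_partition_def)
  ultimately show "\<exists>r \<le> length mu. lam = add_part r mu" by blast
qed (auto intro: single_box_add_part)

definition added_row :: "nat list \<Rightarrow> nat list \<Rightarrow> nat" where
  "added_row lam mu = (SOME r. r \<le> length mu \<and> lam = add_part r mu)"

lemma added_row:
  assumes "r \<le> length mu" "lam = add_part r mu"
  shows "added_row lam mu = r"
proof -
  have "added_row lam mu \<le> length mu \<and> lam = add_part (added_row lam mu) mu"
    unfolding added_row_def by (rule someI[of _ r]) (use assms in simp)
  then show ?thesis using add_part_inj[of "added_row lam mu" mu r] assms by simp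
qed

section \<open>Standard tableaux with one more box\<close>

lemma row_at_add_box:
  "r \<le> length X \<Longrightarrow> row_at (add_box r x X) k = (if k = r then row_at X r @ [x] else row_at X k)"
  by (auto simp: add_box_def row_at_def nth_append)

lemma nth_row_at_add_box:
  "r \<le> length X \<Longrightarrow> c < length (row_at X k) \<Longrightarrow> row_at (add_box r x X) k ! c = row_at X k ! c"
  by (auto simp: row_at_add_box nth_append)

lemma length_row_at: "length (row_at X k) = part_at (map length X) k"
  by (simp add: row_at_def part_at_def)

definition columns_increasing :: "nat list list \<Rightarrow> bool" where
  "columns_increasing T \<longleftrightarrow> (\<forall>k c. c < length (row_at T (Suc k)) \<longrightarrow> row_at T k ! c < row_at T (Suc k) ! c)"

lemma mem_SYT_iff:
  "T \<in> SYT lam \<longleftrightarrow> map length T = lam \<and> distinct (concat T) \<and> set (concat T) = {1..sum_list lam}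
     \<and> (\<forall>row\<in>set T. sorted_wrt (<) row) \<and> columns_increasing T"
  by (auto simp: SYT_def columns_increasing_def row_at_def)

lemma sorted_wrt_ge_iff_part_at: "sorted_wrt (\<ge>) xs \<longleftrightarrow> (\<forall>k. part_at xs (Suc k) \<le> part_at xs k)"
proof -
  have "transp ((\<ge>) :: nat \<Rightarrow> nat \<Rightarrow> bool)" by (rule transpI) simp
  then show ?thesis by (auto simp: sorted_wrt_iff_nth_Suc_transp part_at_def)
qed

lemma is_partition_remove_box:
  assumes lam: "is_partition n (add_part r mu)" and r: "r \<le> length mu" and pos: "\<forall>k\<in>set mu. 0 < k"
    and corner: "part_at (add_part r mu) (Suc r) < part_at (add_part r mu) r"
  shows "is_partition (n - 1) mu"
proof -
  have "part_at mu (Suc k) \<le> part_at mu k" for k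
  proof -
    have "part_at (add_part r mu) (Suc k) \<le> part_at (add_part r mu) k"
      using lam by (simp add: is_partition_def sorted_wrt_ge_iff_part_at)
    then show ?thesis using corner part_at_add_part[OF r] by (auto split: if_splits)
  qed
  moreover have "sum_list mu = n - 1" using lam sum_list_add_part[OF r] by (auto simp: is_partition_def)
  ultimately show ?thesis using pos by (simp add: is_partition_def sorted_wrt_ge_iff_part_at)
qed

lemma partition_remove_corner:
  assumes lam: "is_partition n lam" and r: "r < length lam"
    and corner: "Suc r < length lam \<Longrightarrow> lam ! Suc r < lam ! r"
  obtains mu where "is_partition (n - 1) mu" "r \<le> length mu" "lam = add_part r mu"
proof -
  have pos: "\<forall>k\<in>set lam. 0 < k" using lam by (simp add: is_partition_def)
  obtain mu where mu: "r \<le> length mu" "lam = add_part r mu" "\<forall>k\<in>set mu. 0 < k"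
  proof (cases "lam ! r = 1")
    case True
    have r_last: "length lam = Suc r"
    proof (rule ccontr)
      assume "length lam \<noteq> Suc r"
      then have "Suc r < length lam" using r by simp
      then show False using corner True pos nth_mem[of "Suc r" lam] by auto
    qed
    moreover have "lam \<noteq> []" using r by auto
    ultimately have "last lam = 1" using True r_last by (simp add: last_conv_nth)
    then have "lam = butlast lam @ [1]" using \<open>lam \<noteq> []\<close> append_butlast_last_id[of lam] by simp
    moreover have "\<forall>k\<in>set (butlast lam). 0 < k" using pos by (auto dest: in_set_butlastD)
    ultimately show ?thesis using that[of "butlast lam"] r_last by (simp add: add_part_def)
  next
    case False
    then have "1 < lam ! r" using pos r nth_mem[of r lam] by fastforce
    then have "\<forall>k\<in>set (lam[r := lam ! r - 1]). 0 < k"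
      using pos set_update_subset_insert[of lam r "lam ! r - 1"] by auto
    then show ?thesis using that[of "lam[r := lam ! r - 1]"] r \<open>1 < lam ! r\<close> by (simp add: add_part_def)
  qed
  moreover have "part_at lam (Suc r) < part_at lam r"
    using corner r pos nth_mem[of r lam] by (auto simp: part_at_def)
  ultimately have "is_partition (n - 1) mu" using is_partition_remove_box[of n r mu] lam by simp
  with mu show ?thesis using that by blast
qed

lemma add_box_last:
  assumes T: "map length T = add_part r mu" and r: "r \<le> length mu"
  obtains X where "map length X = mu" "T = add_box r (last (T ! r)) X"
proof (cases "r < length mu")
  case True
  have lT: "length T = length mu" using arg_cong[OF T, of length] True by (simp add: add_part_def)
  have "length (T ! r) = Suc (mu ! r)"
    using arg_cong[OF T, of "\<lambda>xs. xs ! r"] True lT by (simp add: add_part_def)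
  then have "butlast (T ! r) @ [last (T ! r)] = T ! r" by (intro append_butlast_last_id) auto
  moreover have "map length (T[r := butlast (T ! r)]) = mu"
    using T True \<open>length (T ! r) = Suc (mu ! r)\<close> by (simp add: add_part_def map_update)
  ultimately show ?thesis using that[of "T[r := butlast (T ! r)]"] True lT by (simp add: add_box_def)
next
  case False
  then have T': "map length T = mu @ [1]" using T r by (simp add: add_part_def)
  have "length T = length (map length T)" by simp
  also have "\<dots> = Suc r" using T' r False by simp
  finally have lT: "length T = Suc r" .
  have "length (T ! r) = 1" using arg_cong[OF T', of "\<lambda>xs. xs ! r"] False r lT by simp
  then obtain a where a: "T ! r = [a]" by (auto simp: length_Suc_conv)
  have "T = butlast T @ [last T]" using lT by (intro append_butlast_last_id[symmetric]) auto
  also have "last T = T ! r" using last_conv_nth[of T] lT by (cases T) auto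
  finally have "T = butlast T @ [[last (T ! r)]]" using a by simp
  moreover have "map length (butlast T) = mu" using T' by (simp add: map_butlast)
  ultimately show ?thesis using that[of "butlast T"] lT by (simp add: add_box_def)
qed

lemma SYT_max_corner:
  assumes T: "T \<in> SYT lam" and n: "sum_list lam = n" "1 \<le> n"
  obtains r where "r < length T" "last (T ! r) = n"
    "Suc r < length T \<Longrightarrow> length (T ! Suc r) < length (T ! r)"
proof -
  have entries: "set (concat T) = {1..n}" and rows: "\<forall>row\<in>set T. sorted_wrt (<) row"
    and cols: "\<And>k c. Suc k < length T \<Longrightarrow> c < length (T ! Suc k) \<Longrightarrow> T ! k ! c < T ! Suc k ! c"
    using T n by (auto simp: SYT_def)
  have le_n: "T ! k ! c \<le> n" if "k < length T" "c < length (T ! k)" for k c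
  proof -
    have "T ! k ! c \<in> set (concat T)" using that by (auto intro!: bexI[of _ "T ! k"])
    then show ?thesis using entries by (simp del: set_concat)
  qed
  have "n \<in> set (concat T)" using entries n by simp
  then obtain row where "row \<in> set T" "n \<in> set row" by auto
  then obtain r c where r: "r < length T" and c: "c < length (T ! r)" and n_at: "T ! r ! c = n"
    by (metis in_set_conv_nth)
  have c_last: "length (T ! r) = Suc c"
  proof (rule ccontr)
    assume "length (T ! r) \<noteq> Suc c"
    then have "Suc c < length (T ! r)" using c by simp
    moreover have "sorted_wrt (<) (T ! r)" using rows r by simp
    ultimately have "T ! r ! c < T ! r ! Suc c" using sorted_wrt_nth_less by blast
    then show False using le_n[OF r \<open>Suc c < length (T ! r)\<close>] n_at by simp
  qed
  have "length (T ! Suc r) \<le> c" if "Suc r < length T"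
  proof (rule ccontr)
    assume "\<not> length (T ! Suc r) \<le> c"
    then show False using cols[OF that, of c] le_n[OF that, of c] n_at by simp
  qed
  moreover have "last (T ! r) = n"
    using last_conv_nth[of "T ! r"] c_last n_at by (cases "T ! r") auto
  ultimately show ?thesis using that r c c_last by fastforce
qed

lemma rows_sorted_add_box_iff:
  assumes r: "r \<le> length X" and max: "\<forall>y\<in>set (concat X). y < x"
  shows "(\<forall>row\<in>set (add_box r x X). sorted_wrt (<) row) \<longleftrightarrow> (\<forall>row\<in>set X. sorted_wrt (<) row)"
proof
  assume sorted: "\<forall>row\<in>set (add_box r x X). sorted_wrt (<) row"
  show "\<forall>row\<in>set X. sorted_wrt (<) row"
  proof
    fix row assume "row \<in> set X"
    then obtain k where k: "k < length X" "row = X ! k" by (auto simp: in_set_conv_nth)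
    then have "add_box r x X ! k \<in> set (add_box r x X)" using length_add_box[OF r] by simp
    then have "sorted_wrt (<) (add_box r x X ! k)" using sorted by blast
    moreover have "add_box r x X ! k = (if k = r then X ! k @ [x] else X ! k)"
      using nth_add_box[OF r, of k x] length_add_box[OF r] k by (simp add: row_at_def)
    ultimately show "sorted_wrt (<) row" using k by (simp add: sorted_wrt_append split: if_splits)
  qed
next
  assume sorted: "\<forall>row\<in>set X. sorted_wrt (<) row"
  have "sorted_wrt (<) (row_at X r)" "\<forall>y\<in>set (row_at X r). y < x"
    using sorted max nth_mem[of r X] by (auto simp: row_at_def)
  then have "sorted_wrt (<) (row_at X r @ [x])" by (simp add: sorted_wrt_append)
  then show "\<forall>row\<in>set (add_box r x X). sorted_wrt (<) row" using sorted set_add_box[of r x X] by blast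
qed

lemma columns_increasing_add_box_iff:
  assumes r: "r \<le> length X" and mu: "is_partition N (map length X)"
    and lam: "is_partition (Suc N) (add_part r (map length X))" and max: "\<forall>y\<in>set (concat X). y < x"
  shows "columns_increasing (add_box r x X) \<longleftrightarrow> columns_increasing X"
proof -
  let ?T = "add_box r x X" and ?mu = "map length X"
  have same: "row_at ?T k ! c = row_at X k ! c" if "c < part_at ?mu k" for k c
    using nth_row_at_add_box[OF r] that by (simp add: length_row_at)
  have len_T: "length (row_at ?T k) = part_at ?mu k + (if k = r then 1 else 0)" for k
    using r by (simp add: length_row_at map_length_add_box part_at_add_part)
  have mono: "part_at ?mu (Suc k) \<le> part_at ?mu k" for k using part_at_antimono[OF mu] by simp
  have lt_x: "row_at X k ! c < x" if "c < part_at ?mu k" for k c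
  proof -
    have k: "k < length X" using that by (simp add: part_at_def split: if_splits)
    then have "c < length (X ! k)" using that by (simp add: part_at_def)
    then have "X ! k ! c \<in> set (concat X)" using k by (auto intro!: bexI[of _ "X ! k"])
    then show ?thesis using max k by (simp add: row_at_def del: set_concat)
  qed
  show ?thesis
  proof
    assume T: "columns_increasing ?T"
    show "columns_increasing X"
      unfolding columns_increasing_def
    proof (intro allI impI)
      fix k c assume "c < length (row_at X (Suc k))"
      then have "c < part_at ?mu (Suc k)" "c < part_at ?mu k" using mono[of k] by (auto simp: length_row_at)
      moreover from this have "c < length (row_at ?T (Suc k))" using len_T[of "Suc k"] by simp
      ultimately show "row_at X k ! c < row_at X (Suc k) ! c"
        using T[unfolded columns_increasing_def, rule_format, of c k] same[of c k] same[of c "Suc k"]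
        by simp
    qed
  next
    assume X: "columns_increasing X"
    show "columns_increasing ?T"
      unfolding columns_increasing_def
    proof (intro allI impI)
      fix k c assume c: "c < length (row_at ?T (Suc k))"
      show "row_at ?T k ! c < row_at ?T (Suc k) ! c"
      proof (cases "c < part_at ?mu (Suc k)")
        case True
        then show ?thesis using X same mono[of k] by (auto simp: columns_increasing_def length_row_at)
      next
        case False
        then have new: "Suc k = r" "c = part_at ?mu r" using c len_T[of "Suc k"] by (auto split: if_splits)
        then have "c < part_at ?mu k"
          using part_at_antimono[OF lam, of k r] r by (simp add: part_at_add_part)
        moreover have "row_at ?T (Suc k) ! c = x" using new r by (simp add: row_at_add_box flip: length_row_at)
        ultimately show ?thesis using same lt_x by simp
      qed
    qed
  qed
qed

lemma entries_add_box_iff: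
  fixes X :: "nat list list"
  assumes r: "r \<le> length X" and n: "1 \<le> n"
  shows "distinct (concat (add_box r n X)) \<and> set (concat (add_box r n X)) = {1..n}
     \<longleftrightarrow> distinct (concat X) \<and> set (concat X) = {1..n - 1}"
proof -
  have "{1..n} = insert n {1..n - 1}" "n \<notin> {1..n - 1}" using n by auto
  then show ?thesis
    using set_concat_add_box[OF r, of n] distinct_concat_add_box[OF r, of n]
    by (metis Diff_insert_absorb insertI1)
qed

lemma SYT_add_box_iff:
  assumes mu: "is_partition (n - 1) mu" and lam: "is_partition n (add_part r mu)"
    and r: "r \<le> length mu" and X: "map length X = mu"
  shows "add_box r n X \<in> SYT (add_part r mu) \<longleftrightarrow> X \<in> SYT mu"
proof -
  have sums: "sum_list (add_part r mu) = n" "sum_list mu = n - 1" "n = Suc (n - 1)"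
    using lam mu sum_list_add_part[OF r] by (auto simp: is_partition_def)
  have rX: "r \<le> length X" using r X by auto
  have rows_and_columns_iff:
    "(\<forall>row\<in>set (add_box r n X). sorted_wrt (<) row) \<and> columns_increasing (add_box r n X)
       \<longleftrightarrow> (\<forall>row\<in>set X. sorted_wrt (<) row) \<and> columns_increasing X"
    if "set (concat X) = {1..n - 1}"
  proof -
    have "\<forall>y\<in>set (concat X). y < n" using that sums by auto
    then show ?thesis
      using rows_sorted_add_box_iff[OF rX] columns_increasing_add_box_iff[OF rX, of "n - 1"] mu lam X sums
      by simp
  qed
  have "add_box r n X \<in> SYT (add_part r mu) \<longleftrightarrow>
      (distinct (concat (add_box r n X)) \<and> set (concat (add_box r n X)) = {1..n})
      \<and> (\<forall>row\<in>set (add_box r n X). sorted_wrt (<) row) \<and> columns_increasing (add_box r n X)"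
    using map_length_add_box[OF rX, of n] X sums by (auto simp: mem_SYT_iff)
  moreover have "X \<in> SYT mu \<longleftrightarrow> (distinct (concat X) \<and> set (concat X) = {1..n - 1})
      \<and> (\<forall>row\<in>set X. sorted_wrt (<) row) \<and> columns_increasing X"
    using X sums by (auto simp: mem_SYT_iff)
  moreover have "1 \<le> n" using sums by simp
  ultimately show ?thesis using rows_and_columns_iff entries_add_box_iff[OF rX] by blast
qed

lemma SYT_remove_max:
  assumes T: "T \<in> SYT lam" and lam: "is_partition n lam" and n: "1 \<le> n"
  obtains mu r X where "is_partition (n - 1) mu" "r \<le> length mu" "lam = add_part r mu"
    "X \<in> SYT mu" "T = add_box r n X"
proof -
  have shape: "map length T = lam" and sum: "sum_list lam = n"
    using T lam by (auto simp: SYT_def is_partition_def)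
  obtain r where r: "r < length T" "last (T ! r) = n"
    and corner: "Suc r < length T \<Longrightarrow> length (T ! Suc r) < length (T ! r)"
    using SYT_max_corner[OF T sum n] by blast
  have "r < length lam" "Suc r < length lam \<Longrightarrow> lam ! Suc r < lam ! r"
    using r corner shape by auto
  then obtain mu where mu: "is_partition (n - 1) mu" "r \<le> length mu" "lam = add_part r mu"
    using partition_remove_corner[OF lam] by blast
  obtain X where X: "map length X = mu" "T = add_box r n X"
    using add_box_last[of T r mu] shape mu r by auto
  have "X \<in> SYT mu" using SYT_add_box_iff[of n mu r X] mu lam X T by simp
  with mu X show ?thesis using that by blast
qed

definition remove_entry :: "'a \<Rightarrow> 'a list list \<Rightarrow> 'a list list" where
  "remove_entry x T = filter (\<lambda>row. row \<noteq> []) (map (removeAll x) T)"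

lemma remove_entry_add_box:
  assumes "r \<le> length X" "[] \<notin> set X" "x \<notin> set (concat X)"
  shows "remove_entry x (add_box r x X) = X"
proof -
  have "map (removeAll x) X = X" using assms(3) by (intro map_idI) auto
  moreover have "filter (\<lambda>row. row \<noteq> []) X = X" using assms(2) by (auto simp: filter_id_conv)
  moreover have "r < length X \<Longrightarrow> removeAll x (X ! r @ [x]) = X ! r" using assms(3) by auto
  ultimately show ?thesis using assms(1) by (auto simp: remove_entry_def add_box_def map_update)
qed

section \<open>Edges of the crystal skeleton\<close>

lemma CS_edge_iff:
  "(T, I, T') \<in> snd (CS lam) \<longleftrightarrow> T \<in> SYT lam \<and> (\<exists>i m b. I = {i..i + 2 * m}
     \<and> dyck_interval (sum_list lam) (row_word T) i m \<and> f_op i (collapse i m (row_word T)) = Some b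
     \<and> T' = reshape lam (std_word b))"
  by (auto simp: CS_def)

lemma CS_edge_target:
  assumes "(X, I, Y) \<in> snd (CS mu)" "\<forall>k\<in>set mu. 0 < k"
  shows "map length Y = mu" "[] \<notin> set Y" "set (concat Y) \<subseteq> {1..sum_list mu}"
proof -
  obtain i m b where X: "X \<in> SYT mu" and b: "f_op i (collapse i m (row_word X)) = Some b"
    and Y: "Y = reshape mu (std_word b)"
    using assms(1) by (auto simp: CS_edge_iff)
  have "length b = sum_list mu"
    using f_op_SomeD[OF b] X by (simp add: SYT_def length_row_word)
  then show "map length Y = mu" "set (concat Y) \<subseteq> {1..sum_list mu}"
    using Y map_length_reshape row_word_reshape set_std_word set_row_word by (metis length_std_word)+
  then show "[] \<notin> set Y" using assms(2) by force
qed

lemma crystal_step_insert_max: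
  assumes lw: "length w = sum_list mu" and r: "r \<le> length mu" and max: "\<forall>y\<in>set w. y < N"
    and N: "N = Suc (sum_list mu)" and im: "i + 2 * m < N"
  defines "p \<equiv> sum_list (drop r mu)"
  shows "dyck_interval N (insert_at p N w) i m \<and> f_op i (collapse i m (insert_at p N w)) = Some b'
       \<and> T' = reshape (add_part r mu) (std_word b')
     \<longleftrightarrow> (\<exists>b. dyck_interval (N - 1) w i m \<and> f_op i (collapse i m w) = Some b
       \<and> b' = insert_at p N b \<and> T' = add_box r N (reshape mu (std_word b)))"
proof -
  have p: "p \<le> length w" using lw sum_list_drop_le[of r mu] by (simp add: p_def)
  have target: "reshape (add_part r mu) (std_word (insert_at p N b)) = add_box r N (reshape mu (std_word b))"
    if "dyck_interval (N - 1) w i m" "f_op i (collapse i m w) = Some b" for b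
  proof -
    have "Suc i < N" using im that(1) by (simp add: dyck_interval_def)
    moreover have "set b \<subseteq> insert (Suc i) (set w \<union> {i, Suc i})"
      using f_op_SomeD[OF that(2)] set_collapse[of i m w] by blast
    ultimately have "\<forall>y\<in>set b. y < N" using max by auto
    moreover have "length b = sum_list mu" using f_op_SomeD[OF that(2)] lw by simp
    ultimately show ?thesis using reshape_std_word_insert_max[OF _ _ r] N by (simp add: p_def)
  qed
  show ?thesis
  proof
    assume "dyck_interval N (insert_at p N w) i m \<and> f_op i (collapse i m (insert_at p N w)) = Some b'
       \<and> T' = reshape (add_part r mu) (std_word b')"
    moreover from this obtain b where "dyck_interval (N - 1) w i m" "f_op i (collapse i m w) = Some b"
      "b' = insert_at p N b"
      using dyck_f_op_insert_max[OF p im] by blast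
    ultimately show "\<exists>b. dyck_interval (N - 1) w i m \<and> f_op i (collapse i m w) = Some b
       \<and> b' = insert_at p N b \<and> T' = add_box r N (reshape mu (std_word b))"
      using target by auto
  next
    assume "\<exists>b. dyck_interval (N - 1) w i m \<and> f_op i (collapse i m w) = Some b
       \<and> b' = insert_at p N b \<and> T' = add_box r N (reshape mu (std_word b))"
    then obtain b where b: "dyck_interval (N - 1) w i m" "f_op i (collapse i m w) = Some b"
      "b' = insert_at p N b" "T' = add_box r N (reshape mu (std_word b))"
      by blast
    then show "dyck_interval N (insert_at p N w) i m \<and> f_op i (collapse i m (insert_at p N w)) = Some b'
       \<and> T' = reshape (add_part r mu) (std_word b')"
      using dyck_f_op_insert_max[OF p im, of b'] target[OF b(1,2)] by auto
  qed
qed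

lemma CS_edge_add_box_iff:
  assumes mu: "is_partition (n - 1) mu" and lam: "is_partition n (add_part r mu)"
    and r: "r \<le> length mu" and X: "X \<in> SYT mu"
  shows "(add_box r n X, I, T') \<in> snd (CS (add_part r mu)) \<and> n \<notin> I
     \<longleftrightarrow> (\<exists>Y. (X, I, Y) \<in> snd (CS mu) \<and> T' = add_box r n Y)"
proof -
  define w where "w = row_word X"
  define p where "p = sum_list (drop r mu)"
  have shape: "map length X = mu" and entries: "set (concat X) = {1..n - 1}"
    and sums: "sum_list (add_part r mu) = n" "sum_list mu = n - 1"
    using X mu lam by (auto simp: SYT_def is_partition_def)
  have N: "n = Suc (sum_list mu)" using sums(1) sum_list_add_part[OF r] by simp
  have rX: "r \<le> length X" using r shape by auto
  have rw: "row_word (add_box r n X) = insert_at p n w"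
    using row_word_add_box[OF rX] shape by (simp add: w_def p_def drop_map[symmetric])
  have lw: "length w = sum_list mu" using shape by (simp add: w_def length_row_word)
  have max: "\<forall>y\<in>set w. y < n" using entries sums by (auto simp: w_def set_row_word)
  have T: "add_box r n X \<in> SYT (add_part r mu)" using SYT_add_box_iff[OF mu lam r shape] X by simp
  note step = crystal_step_insert_max[OF lw r max N, folded p_def]
  show ?thesis
  proof
    assume "(add_box r n X, I, T') \<in> snd (CS (add_part r mu)) \<and> n \<notin> I"
    then obtain i m b' where I: "I = {i..i + 2 * m}" "n \<notin> I"
      and edge: "dyck_interval n (insert_at p n w) i m" "f_op i (collapse i m (insert_at p n w)) = Some b'"
        "T' = reshape (add_part r mu) (std_word b')"
      unfolding CS_edge_iff sums(1) rw by blast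
    then have "i + 2 * m < n" by (auto simp: dyck_interval_def)
    then obtain b where "dyck_interval (n - 1) w i m" "f_op i (collapse i m w) = Some b"
      "T' = add_box r n (reshape mu (std_word b))"
      using iffD1[OF step] edge by blast
    then show "\<exists>Y. (X, I, Y) \<in> snd (CS mu) \<and> T' = add_box r n Y"
      unfolding CS_edge_iff sums(2) w_def[symmetric] using X I(1) by blast
  next
    assume "\<exists>Y. (X, I, Y) \<in> snd (CS mu) \<and> T' = add_box r n Y"
    then obtain i m b where I: "I = {i..i + 2 * m}" and b: "dyck_interval (n - 1) w i m"
      "f_op i (collapse i m w) = Some b" "T' = add_box r n (reshape mu (std_word b))"
      unfolding CS_edge_iff sums(2) w_def[symmetric] by blast
    then have "i + 2 * m < n" by (auto simp: dyck_interval_def)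
    then have "dyck_interval n (insert_at p n w) i m
      \<and> f_op i (collapse i m (insert_at p n w)) = Some (insert_at p n b)
      \<and> T' = reshape (add_part r mu) (std_word (insert_at p n b))"
      using iffD2[OF step] b by blast
    then show "(add_box r n X, I, T') \<in> snd (CS (add_part r mu)) \<and> n \<notin> I"
      unfolding CS_edge_iff sums(1) rw using T I \<open>i + 2 * m < n\<close> by auto
  qed
qed

section \<open>Splitting off the largest entry\<close>

lemma lgraph_iso_sym: "lgraph_iso G H \<Longrightarrow> lgraph_iso H G"
proof -
  assume "lgraph_iso G H"
  then obtain f where f: "bij_betw f (fst G) (fst H)"
    and edges: "\<forall>u\<in>fst G. \<forall>v\<in>fst G. \<forall>l. (u, l, v) \<in> snd G \<longleftrightarrow> (f u, l, f v) \<in> snd H"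
    unfolding lgraph_iso_def by blast
  let ?g = "inv_into (fst G) f"
  have "bij_betw ?g (fst H) (fst G)" using f by (rule bij_betw_inv_into)
  moreover have "?g u \<in> fst G" "f (?g u) = u" if "u \<in> fst H" for u
    using f that by (auto simp: bij_betw_def inv_into_into f_inv_into_f)
  ultimately show "lgraph_iso H G" unfolding lgraph_iso_def using edges by metis
qed

lemma added_row_spec:
  assumes "is_partition n lam" "is_partition (n - 1) mu" "single_box lam mu"
  shows "added_row lam mu \<le> length mu" "lam = add_part (added_row lam mu) mu"
  using single_box_iff_add_part[OF assms(1,2)] assms(3) added_row by metis+

definition extend_tableau :: "nat list \<Rightarrow> nat \<Rightarrow> nat list \<times> nat list list \<Rightarrow> nat list list" where
  "extend_tableau lam n = (\<lambda>(mu, X). add_box (added_row lam mu) n X)"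

lemma remove_entry_extend_tableau:
  assumes lam: "is_partition n lam" and n: "1 \<le> n"
    and mu: "is_partition (n - 1) mu" "single_box lam mu" and X: "X \<in> SYT mu"
  shows "remove_entry n (extend_tableau lam n (mu, X)) = X"
proof -
  have "map length X = mu" "set (concat X) = {1..n - 1}" "\<forall>k\<in>set mu. 0 < k"
    using X mu by (auto simp: SYT_def is_partition_def)
  moreover have "added_row lam mu \<le> length mu" using added_row_spec[OF lam mu] by simp
  ultimately show ?thesis using n by (auto simp: extend_tableau_def intro!: remove_entry_add_box)
qed

lemma extend_tableau_SYT:
  assumes lam: "is_partition n lam" and mu: "is_partition (n - 1) mu" "single_box lam mu"
    and X: "X \<in> SYT mu"
  shows "extend_tableau lam n (mu, X) \<in> SYT lam"
proof -
  have "map length X = mu" using X by (simp add: SYT_def)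
  then show ?thesis
    using SYT_add_box_iff[OF mu(1) _ added_row_spec(1)[OF lam mu]] added_row_spec(2)[OF lam mu] lam X
    by (simp add: extend_tableau_def)
qed

lemma extend_tableau_bij:
  assumes lam: "is_partition n lam" and n: "1 \<le> n"
  shows "bij_betw (extend_tableau lam n)
           (SIGMA mu:{mu. is_partition (n - 1) mu \<and> single_box lam mu}. SYT mu) (SYT lam)"
    (is "bij_betw _ ?A _")
proof (rule bij_betw_imageI)
  show "inj_on (extend_tableau lam n) ?A"
  proof (rule inj_onI, clarify)
    fix mu X mu' X'
    assume mu: "is_partition (n - 1) mu" "single_box lam mu" and X: "X \<in> SYT mu"
      and mu': "is_partition (n - 1) mu'" "single_box lam mu'" and X': "X' \<in> SYT mu'"
      and eq: "extend_tableau lam n (mu, X) = extend_tableau lam n (mu', X')"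
    have "X = X'"
      using remove_entry_extend_tableau[OF lam n mu X] remove_entry_extend_tableau[OF lam n mu' X'] eq
      by simp
    moreover have "mu = map length X" "mu' = map length X'" using X X' by (auto simp: SYT_def)
    ultimately show "mu = mu' \<and> X = X'" by simp
  qed
  have "T \<in> extend_tableau lam n ` ?A" if T: "T \<in> SYT lam" for T
  proof -
    obtain mu r X where mu: "is_partition (n - 1) mu" "r \<le> length mu" "lam = add_part r mu"
      and X: "X \<in> SYT mu" and T: "T = add_box r n X"
      using SYT_remove_max[OF T lam n] by blast
    then have "T = extend_tableau lam n (mu, X)" by (simp add: extend_tableau_def added_row)
    moreover have "single_box lam mu" using single_box_add_part mu by simp
    ultimately show ?thesis using mu X by blast
  qed
  then show "extend_tableau lam n ` ?A = SYT lam" using extend_tableau_SYT[OF lam] by auto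
qed

lemma extend_tableau_edge_iff:
  assumes lam: "is_partition n lam" and n: "1 \<le> n"
    and mu: "is_partition (n - 1) mu" "single_box lam mu" and X: "X \<in> SYT mu"
    and mu': "is_partition (n - 1) mu'" "single_box lam mu'" and X': "X' \<in> SYT mu'"
  shows "(extend_tableau lam n (mu, X), l, extend_tableau lam n (mu', X'))
           \<in> snd (remove_label_containing n (CS lam))
     \<longleftrightarrow> mu' = mu \<and> (X, l, X') \<in> snd (CS mu)"
proof -
  define r where "r = added_row lam mu"
  have r: "r \<le> length mu" "lam = add_part r mu" using added_row_spec[OF lam mu] by (auto simp: r_def)
  have lam': "is_partition n (add_part r mu)" using lam by (simp flip: r(2))
  have "(extend_tableau lam n (mu, X), l, extend_tableau lam n (mu', X'))
           \<in> snd (remove_label_containing n (CS lam))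
     \<longleftrightarrow> (add_box r n X, l, extend_tableau lam n (mu', X')) \<in> snd (CS (add_part r mu)) \<and> n \<notin> l"
    by (simp add: remove_label_containing_def extend_tableau_def flip: r(2) r_def)
  also have "\<dots> \<longleftrightarrow> (\<exists>Y. (X, l, Y) \<in> snd (CS mu) \<and> extend_tableau lam n (mu', X') = add_box r n Y)"
    by (rule CS_edge_add_box_iff[OF mu(1) lam' r(1) X])
  also have "\<dots> \<longleftrightarrow> mu' = mu \<and> (X, l, X') \<in> snd (CS mu)"
  proof
    assume "\<exists>Y. (X, l, Y) \<in> snd (CS mu) \<and> extend_tableau lam n (mu', X') = add_box r n Y"
    then obtain Y where Y: "(X, l, Y) \<in> snd (CS mu)" and ext: "extend_tableau lam n (mu', X') = add_box r n Y"
      by blast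
    have pos: "\<forall>k\<in>set mu. 0 < k" "sum_list mu = n - 1" using mu by (auto simp: is_partition_def)
    have "map length Y = mu" "[] \<notin> set Y" "n \<notin> set (concat Y)"
      using CS_edge_target[OF Y pos(1)] pos(2) n by auto
    moreover from this have "r \<le> length Y" using r(1) by auto
    ultimately have "X' = Y"
      using remove_entry_extend_tableau[OF lam n mu' X'] ext remove_entry_add_box[of r Y n] by simp
    moreover have "map length X' = mu'" using X' by (simp add: SYT_def)
    ultimately show "mu' = mu \<and> (X, l, X') \<in> snd (CS mu)" using Y \<open>map length Y = mu\<close> by simp
  qed (auto simp: extend_tableau_def r_def)
  finally show ?thesis .
qed

theorem theorem4p11:
  fixes n :: nat and lam :: "nat list"
  assumes "1 \<le> n" and "is_partition n lam"
  shows "lgraph_iso (remove_label_containing n (CS lam))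
           (disj_union {mu. is_partition (n - 1) mu \<and> single_box lam mu} CS)"
proof (rule lgraph_iso_sym)
  let ?S = "{mu. is_partition (n - 1) mu \<and> single_box lam mu}"
  have vertices: "fst (disj_union ?S CS) = (SIGMA mu:?S. SYT mu)"
    "fst (remove_label_containing n (CS lam)) = SYT lam"
    by (simp_all add: disj_union_def remove_label_containing_def CS_def)
  have "(u, l, v) \<in> snd (disj_union ?S CS) \<longleftrightarrow>
      (extend_tableau lam n u, l, extend_tableau lam n v) \<in> snd (remove_label_containing n (CS lam))"
    if "u \<in> (SIGMA mu:?S. SYT mu)" "v \<in> (SIGMA mu:?S. SYT mu)" for u v l
    using that extend_tableau_edge_iff[OF assms(2,1)] by (auto simp: disj_union_def)
  then show "lgraph_iso (disj_union ?S CS) (remove_label_containing n (CS lam))"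
    unfolding lgraph_iso_def vertices using extend_tableau_bij[OF assms(2,1)] by blast
qed

end
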